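(* There is no open neighborhood $V$ of zero in $C^\infty_{\mathrm{ap}}(\mathbb{R}^n,\mathbb{R}^n)$ such that the restriction $\mathrm{Exp}_{\mathrm{LG}}|_V:V\to\mathrm{Diff}^\infty_{\mathrm{ap}}(\mathbb{R}^n)$ is a $C^1_F$-diffeomorphism onto its image.
   Context: For integer $k\ge0$, $C^k_b(\mathbb{R}^n,\mathbb{R})$ is the space of $C^k$ functions with bounded continuous derivatives of order $\le k$, norm $|f|_k=\max_{|\beta|\le k}\sup|\partial^\beta f|$; $C^k_{\mathrm{ap}}=\{f\in C^k_b:\{f(\cdot+c)\}_{c\in\mathbb{R}^n}\text{ precompact in }C^k_b\}$; $C^\infty_{\mathrm{ap}}=\bigcap_{k\ge1}C^k_{\mathrm{ap}}$ with the Fréchet topology of the norms $|\cdot|_k$; vector-valued versions componentwise. $\mathrm{Diff}^\infty_{\mathrm{ap}}(\mathbb{R}^n)$ is the group of maps $\varphi=\mathrm{id}+f$, $f\in C^\infty_{\mathrm{ap}}(\mathbb{R}^n,\mathbb{R}^n)$, $\inf_x\det(I+[d_xf])>0$, with the Fréchet topology of $f$. $\mathrm{Exp}_{\mathrm{LG}}(u)=\varphi(1)$ where $\varphi$ is the unique $C^1_F$ solution in $\mathrm{Diff}^\infty_{\mathrm{ap}}(\mathbb{R}^n)$ of $\dot\varphi=u\circ\varphi$, $\varphi(0)=\mathrm{id}$. $C^1_F$: Fréchet continuously differentiable (directional derivatives exist and are jointly continuous in point and direction); a $C^1_F$-diffeomorphism onto its image is a homeomorphism onto its image which is $C^1_F$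 with $C^1_F$ inverse. *)

theory Defs
  imports "HOL-Analysis.Analysis"
begin

type_synonym 'n vf = "real^'n \<Rightarrow> real^'n"

definition partial :: "'n::finite \<Rightarrow> (real^'n \<Rightarrow> real) \<Rightarrow> real^'n \<Rightarrow> real" where
  "partial i g x = deriv (\<lambda>t. g (x + t *\<^sub>R axis i 1)) 0"

fun pd :: "'n::finite list \<Rightarrow> (real^'n \<Rightarrow> real) \<Rightarrow> real^'n \<Rightarrow> real" where
  "pd [] g = g"
| "pd (i # l) g = partial i (pd l g)"

definition Ckb :: "nat \<Rightarrow> (real^'n::finite \<Rightarrow> real) set" where
  "Ckb k = {g. \<forall>l::'n list. length l \<le> k \<longrightarrow>
      continuous_on UNIV (pd l g) \<and> bounded (range (pd l g)) \<and>
      (length l < k \<longrightarrow> (\<forall>i x. (\<lambda>t. pd l g (x + t *\<^sub>R axis i 1)) differentiable (at 0)))}"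

definition cnorm :: "nat \<Rightarrow> (real^'n::finite \<Rightarrow> real) \<Rightarrow> real" where
  "cnorm k g = (SUP p \<in> {l::'n list. length l \<le> k} \<times> UNIV. \<bar>pd (fst p) g (snd p)\<bar>)"

text \<open>C^k_ap: translates form a precompact (= totally bounded, C^k_b being complete) set in C^k_b.\<close>
definition Ckap :: "nat \<Rightarrow> (real^'n::finite \<Rightarrow> real) set" where
  "Ckap k = {g \<in> Ckb k. \<forall>e>0. \<exists>C. finite C \<and>
      (\<forall>c. \<exists>d\<in>C. cnorm k (\<lambda>x. g (x + c) - g (x + d)) < e)}"

definition Cinfap :: "(real^'n::finite \<Rightarrow> real) set" where
  "Cinfap = (\<Inter>k\<in>{1..}. Ckap k)"

definition CinfAp :: "('n::finite) vf set" where
  "CinfAp = {f. \<forall>j. (\<lambda>x. f x $ j) \<in> Cinfap}"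

definition vnorm :: "nat \<Rightarrow> ('n::finite) vf \<Rightarrow> real" where
  "vnorm k f = (MAX j \<in> UNIV. cnorm k (\<lambda>x. f x $ j))"

definition apopen :: "('n::finite) vf set \<Rightarrow> bool" where
  "apopen V \<longleftrightarrow> V \<subseteq> CinfAp \<and>
     (\<forall>f\<in>V. \<exists>k e. e > 0 \<and> {g \<in> CinfAp. vnorm k (g - f) < e} \<subseteq> V)"

definition jac :: "('n::finite) vf \<Rightarrow> real^'n \<Rightarrow> real^'n^'n" where
  "jac f x = (\<chi> i j. partial j (\<lambda>y. f y $ i) x)"

text \<open>Diff^infty_ap(R^n), represented by the displacements f with phi = id + f.\<close>
definition DiffAp :: "('n::finite) vf set" where
  "DiffAp = {f \<in> CinfAp. \<exists>\<delta>>0. \<forall>x. det (mat 1 + jac f x) \<ge> \<delta>}"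

definition curve_hasderiv :: "(real \<Rightarrow> ('n::finite) vf) \<Rightarrow> ('n::finite) vf \<Rightarrow> real \<Rightarrow> bool" where
  "curve_hasderiv F D t \<longleftrightarrow> (\<forall>k. ((\<lambda>h. vnorm k (\<lambda>x. (1 / h) *\<^sub>R (F (t + h) x - F t x) - D x))
        \<longlongrightarrow> 0) (at 0))"

definition C1curve :: "(real \<Rightarrow> ('n::finite) vf) \<Rightarrow> bool" where
  "C1curve F \<longleftrightarrow> (\<exists>F'. (\<forall>t. F' t \<in> CinfAp \<and> curve_hasderiv F (F' t) t) \<and>
      (\<forall>t k e. e > 0 \<longrightarrow> (\<exists>d>0. \<forall>s. \<bar>s - t\<bar> < d \<longrightarrow> vnorm k (F' s - F' t) < e)))"

text \<open>phi(t) = id + F t solves  phi' = u o phi, phi(0) = id, as a C^1_F curve in Diff_ap.\<close>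
definition LGflow :: "('n::finite) vf \<Rightarrow> (real \<Rightarrow> ('n::finite) vf) \<Rightarrow> bool" where
  "LGflow u F \<longleftrightarrow> F 0 = (\<lambda>x. 0) \<and> (\<forall>t. F t \<in> DiffAp) \<and> C1curve F \<and>
      (\<forall>t. curve_hasderiv F (\<lambda>x. u (x + F t x)) t)"

definition ExpLG :: "('n::finite) vf \<Rightarrow> ('n::finite) vf" where
  "ExpLG u = (\<lambda>x. x + (THE F. LGflow u F) 1 x)"

text \<open>Displacement phi - id of a diffeomorphism phi (the chart of Diff_ap).\<close>
definition disp :: "('n::finite) vf \<Rightarrow> ('n::finite) vf" where
  "disp \<phi> = (\<lambda>x. \<phi> x - x)"

definition fcont :: "('n::finite) vf set \<Rightarrow> (('n::finite) vf \<Rightarrow> ('n::finite) vf) \<Rightarrow> bool" where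
  "fcont U G \<longleftrightarrow> (\<forall>x\<in>U. \<forall>k e. e > 0 \<longrightarrow>
      (\<exists>m d. d > 0 \<and> (\<forall>y\<in>U. vnorm m (y - x) < d \<longrightarrow> vnorm k (G y - G x) < e)))"

text \<open>C^1_F maps (Bastiani): defined on open U; directional derivatives exist and
  are jointly continuous on U x C^infty_ap.\<close>
definition C1F :: "('n::finite) vf set \<Rightarrow> (('n::finite) vf \<Rightarrow> ('n::finite) vf) \<Rightarrow> bool" where
  "C1F U G \<longleftrightarrow> apopen U \<and> (\<forall>x\<in>U. G x \<in> CinfAp) \<and>
     (\<exists>dG. (\<forall>x\<in>U. \<forall>h\<in>CinfAp. dG x h \<in> CinfAp \<and>
              (\<forall>k. ((\<lambda>t. vnorm k (\<lambda>y. (1 / t) *\<^sub>R (G (\<lambda>z. x z + t *\<^sub>R h z) y - G x y) - dG x h y))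
                      \<longlongrightarrow> 0) (at 0))) \<and>
           (\<forall>x\<in>U. \<forall>h\<in>CinfAp. \<forall>k e. e > 0 \<longrightarrow>
              (\<exists>m d. d > 0 \<and> (\<forall>y\<in>U. \<forall>g\<in>CinfAp.
                  vnorm m (y - x) < d \<and> vnorm m (g - h) < d \<longrightarrow> vnorm k (dG y g - dG x h) < e))))"

definition C1F_diffeo_onto_image :: "('n::finite) vf set \<Rightarrow> (('n::finite) vf \<Rightarrow> ('n::finite) vf) \<Rightarrow> bool" where
  "C1F_diffeo_onto_image V G \<longleftrightarrow> inj_on G V \<and> fcont V G \<and> fcont (G ` V) (inv_into V G) \<and>
     C1F V G \<and> C1F (G ` V) (inv_into V G)"

end

(* The field K (1 + s cos (w x_i)) e_i with 0 < s <= 1/2 pushes every point along the i-th axis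
   with a speed depending only on x_i.  If H' = 1 / (K (1 + s cos (w r))), its flow satisfies
   H (x_i (t)) = H (x_i (0)) + t; choosing K so that H (r + 2 pi / w) = H r + 1 makes the time-one
   map the translation by 2 pi / w, whatever s is.  For large w and small s these fields lie in any
   given neighbourhood of 0, so Exp is not injective there. *)

theory Submission
  imports Defs
begin

(* The second cosine makes differences of translates stay in the family. *)
definition trig_ridge :: "'n::finite \<Rightarrow> real \<Rightarrow> real \<Rightarrow> real \<Rightarrow> real \<Rightarrow> real \<Rightarrow> real \<Rightarrow> real^'n \<Rightarrow> real"
  where "trig_ridge i w a b \<theta> b' \<theta>' = (\<lambda>x. a + b * cos (w * x$i + \<theta>) + b' * cos (w * x$i + \<theta>'))"

lemma partial_trig_ridge:
  "partial j (trig_ridge i w a b \<theta> b' \<theta>') =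
     (if j = i then trig_ridge i w 0 (b * w) (\<theta> + pi/2) (b' * w) (\<theta>' + pi/2) else trig_ridge i w 0 0 0 0 0)"
proof (rule ext)
  fix x :: "real^'a"
  show "partial j (trig_ridge i w a b \<theta> b' \<theta>') x =
     (if j = i then trig_ridge i w 0 (b * w) (\<theta> + pi/2) (b' * w) (\<theta>' + pi/2) else trig_ridge i w 0 0 0 0 0) x"
  proof (cases "j = i")
    case True
    have "((\<lambda>t. a + b * cos (w * (x$i + t) + \<theta>) + b' * cos (w * (x$i + t) + \<theta>')) has_real_derivative
       b * (- sin (w * (x$i + 0) + \<theta>) * (w * 1)) + b' * (- sin (w * (x$i + 0) + \<theta>') * (w * 1))) (at 0)"
      by (auto intro!: derivative_eq_intros)
    then have "deriv (\<lambda>t. a + b * cos (w * (x$i + t) + \<theta>) + b' * cos (w * (x$i + t) + \<theta>')) 0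
       = b * (- sin (w * x$i + \<theta>) * w) + b' * (- sin (w * x$i + \<theta>') * w)"
      by (simp add: DERIV_imp_deriv)
    also have "\<dots> = (b * w) * cos (w * x$i + (\<theta> + pi/2)) + (b' * w) * cos (w * x$i + (\<theta>' + pi/2))"
      using minus_sin_cos_eq[of "w * x$i + \<theta>"] minus_sin_cos_eq[of "w * x$i + \<theta>'"]
      by (simp add: algebra_simps)
    finally show ?thesis
      using True by (simp add: partial_def trig_ridge_def axis_def)
  next
    case False
    then show ?thesis by (simp add: partial_def trig_ridge_def axis_def)
  qed
qed

lemma pd_trig_ridge:
  "pd l (trig_ridge i w a b \<theta> b' \<theta>') =
     trig_ridge i w (if l = [] then a else 0)
       (if set l \<subseteq> {i} then b * w ^ length l else 0) (\<theta> + real (length l) * pi/2)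
       (if set l \<subseteq> {i} then b' * w ^ length l else 0) (\<theta>' + real (length l) * pi/2)"
proof (induction l)
  case Nil
  then show ?case by simp
next
  case (Cons j l)
  show ?case
  proof (cases "j = i")
    case True
    then show ?thesis
      by (simp add: Cons.IH partial_trig_ridge) (simp add: trig_ridge_def algebra_simps add_divide_distrib)
  next
    case False
    then show ?thesis
      by (simp add: Cons.IH partial_trig_ridge) (simp add: trig_ridge_def)
  qed
qed

lemma power_le_max_one_power: "m \<le> k \<Longrightarrow> \<bar>w\<bar> ^ m \<le> (max 1 \<bar>w\<bar>) ^ k" for w :: real
  by (rule order_trans[OF power_mono power_increasing]) auto

lemma abs_trig_ridge_le: "\<bar>trig_ridge i w a b \<theta> b' \<theta>' x\<bar> \<le> \<bar>a\<bar> + \<bar>b\<bar> + \<bar>b'\<bar>"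
proof -
  have "\<bar>b * cos (w * x$i + \<theta>)\<bar> \<le> \<bar>b\<bar>" "\<bar>b' * cos (w * x$i + \<theta>')\<bar> \<le> \<bar>b'\<bar>"
    by (simp_all add: abs_mult mult_left_le)
  then show ?thesis unfolding trig_ridge_def by linarith
qed

lemma abs_pd_trig_ridge_le:
  assumes "length l \<le> k"
  shows "\<bar>pd l (trig_ridge i w a b \<theta> b' \<theta>') x\<bar> \<le> \<bar>a\<bar> + (\<bar>b\<bar> + \<bar>b'\<bar>) * (max 1 \<bar>w\<bar>) ^ k"
proof -
  have "\<bar>w\<bar> ^ length l \<le> (max 1 \<bar>w\<bar>) ^ k"
    using power_le_max_one_power assms by blast
  then have coeff: "\<bar>if set l \<subseteq> {i} then c * w ^ length l else 0\<bar> \<le> \<bar>c\<bar> * (max 1 \<bar>w\<bar>) ^ k" for c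
    by (auto simp: abs_mult power_abs intro: mult_left_mono)
  have const: "\<bar>if l = [] then a else 0\<bar> \<le> \<bar>a\<bar>" by auto
  show ?thesis
    unfolding pd_trig_ridge distrib_right add.assoc[symmetric]
    using order_trans[OF abs_trig_ridge_le add_mono[OF add_mono[OF const coeff] coeff]] .
qed

lemma cnorm_leI:
  assumes "\<And>l x. length l \<le> k \<Longrightarrow> \<bar>pd l g x\<bar> \<le> M"
  shows "cnorm k g \<le> M"
  unfolding cnorm_def
  by (rule cSUP_least) (auto intro: assms simp: ex_in_conv[symmetric] intro!: exI[of _ "[]"])

lemma cnorm_trig_ridge_le: "cnorm k (trig_ridge i w a b \<theta> b' \<theta>') \<le> \<bar>a\<bar> + (\<bar>b\<bar> + \<bar>b'\<bar>) * (max 1 \<bar>w\<bar>) ^ k"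
  by (rule cnorm_leI) (rule abs_pd_trig_ridge_le)

lemma trig_ridge_Ckb: "trig_ridge i w a b \<theta> b' \<theta>' \<in> Ckb k"
proof -
  have cont: "continuous_on UNIV (trig_ridge i w a b \<theta> b' \<theta>')" for a b \<theta> b' \<theta>'
    unfolding trig_ridge_def by (intro continuous_intros)
  have bdd: "bounded (range (trig_ridge i w a b \<theta> b' \<theta>'))" for a b \<theta> b' \<theta>'
    unfolding bounded_iff by (intro exI[of _ "\<bar>a\<bar> + \<bar>b\<bar> + \<bar>b'\<bar>"]) (auto intro: abs_trig_ridge_le)
  have diff: "(\<lambda>t. trig_ridge i w a b \<theta> b' \<theta>' (x + t *\<^sub>R v)) differentiable (at 0)"
    for a b \<theta> b' \<theta>' and x v :: "real^'a"
    unfolding trig_ridge_def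
    by (rule differentiableI[OF has_field_derivative_imp_has_derivative]) (auto intro!: derivative_eq_intros)
  show ?thesis
    unfolding Ckb_def mem_Collect_eq pd_trig_ridge by (intro allI impI conjI cont bdd diff)
qed

lemma abs_cos_diff_le: "\<bar>cos x - cos y\<bar> \<le> \<bar>x - y - 2 * pi * of_int q\<bar>"
proof -
  define y' where "y' = y + 2 * pi * of_int q"
  have "cos y = cos y'"
    by (simp add: y'_def cos_add)
  then have "\<bar>cos x - cos y\<bar> = 2 * \<bar>sin ((x + y') / 2)\<bar> * \<bar>sin ((y' - x) / 2)\<bar>"
    by (simp add: cos_diff_cos abs_mult)
  also have "\<dots> \<le> 2 * 1 * \<bar>(y' - x) / 2\<bar>"
    by (intro mult_mono abs_sin_x_le_abs_x) auto
  finally show ?thesis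
    by (simp add: y'_def algebra_simps)
qed

lemma cnorm_trig_ridge_diff_le:
  "cnorm k (trig_ridge i w 0 b \<alpha> (-b) \<beta>) \<le> \<bar>b\<bar> * (max 1 \<bar>w\<bar>) ^ k * \<bar>\<alpha> - \<beta> - 2 * pi * of_int q\<bar>"
proof (rule cnorm_leI)
  fix l :: "'a list" and x
  assume "length l \<le> k"
  define B where "B = (if set l \<subseteq> {i} then b * w ^ length l else 0)"
  define \<phi> where "\<phi> = w * x$i + real (length l) * pi / 2"
  have B: "\<bar>B\<bar> \<le> \<bar>b\<bar> * (max 1 \<bar>w\<bar>) ^ k"
    using power_le_max_one_power[OF \<open>length l \<le> k\<close>, of w]
    by (auto simp: B_def abs_mult power_abs intro: mult_left_mono)
  have "pd l (trig_ridge i w 0 b \<alpha> (-b) \<beta>) x = B * (cos (\<phi> + \<alpha>) - cos (\<phi> + \<beta>))"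
    unfolding pd_trig_ridge by (simp add: trig_ridge_def B_def \<phi>_def algebra_simps)
  then have "\<bar>pd l (trig_ridge i w 0 b \<alpha> (-b) \<beta>) x\<bar> = \<bar>B\<bar> * \<bar>cos (\<phi> + \<alpha>) - cos (\<phi> + \<beta>)\<bar>"
    by (simp add: abs_mult)
  also have "\<dots> \<le> \<bar>b\<bar> * (max 1 \<bar>w\<bar>) ^ k * \<bar>\<alpha> - \<beta> - 2 * pi * of_int q\<bar>"
    using abs_cos_diff_le[of "\<phi> + \<alpha>" "\<phi> + \<beta>" q] B by (intro mult_mono) simp_all
  finally show "\<bar>pd l (trig_ridge i w 0 b \<alpha> (-b) \<beta>) x\<bar> \<le> \<bar>b\<bar> * (max 1 \<bar>w\<bar>) ^ k * \<bar>\<alpha> - \<beta> - 2 * pi * of_int q\<bar>" .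
qed

lemma trig_ridge_translate:
  "(\<lambda>x. trig_ridge i w a b \<theta> 0 \<theta>' (x + c) - trig_ridge i w a b \<theta> 0 \<theta>' (x + d)) =
     trig_ridge i w 0 b (\<theta> + w * c$i) (-b) (\<theta> + w * d$i)"
  by (rule ext) (simp add: trig_ridge_def algebra_simps)

lemma angle_near_grid:
  assumes "M > 0"
  shows "\<exists>j<M. \<exists>q::int. \<bar>y - 2 * pi * real j / real M - 2 * pi * of_int q\<bar> \<le> 2 * pi / real M"
proof -
  define n where "n = \<lfloor>y * real M / (2 * pi)\<rfloor>"
  define j where "j = nat (n mod int M)"
  define q where "q = n div int M"
  have "n = q * int M + int j"
    using assms by (simp add: j_def q_def)
  then have grid: "2 * pi * real j / real M + 2 * pi * of_int q = 2 * pi * of_int n / real M"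
    using assms by (simp add: field_simps)
  have frac: "0 \<le> y * real M / (2 * pi) - of_int n" "y * real M / (2 * pi) - of_int n \<le> 1"
    unfolding n_def by linarith+
  have "y - 2 * pi * of_int n / real M = (y * real M / (2 * pi) - of_int n) * (2 * pi / real M)"
    using assms by (simp add: field_simps)
  then have "0 \<le> y - 2 * pi * of_int n / real M" "y - 2 * pi * of_int n / real M \<le> 2 * pi / real M"
    using frac mult_left_le_one_le[of "2 * pi / real M"] by simp_all
  moreover have "j < M"
    using assms by (simp add: j_def nat_less_iff)
  ultimately show ?thesis
    using grid by (intro exI[of _ j] conjI exI[of _ q]) (simp_all add: diff_diff_eq)
qed

lemma axis_grid_approx:
  assumes "w \<noteq> 0" "M > 0"
  shows "\<exists>d \<in> (\<lambda>j. (2 * pi * real j / (w * real M)) *\<^sub>R (axis i 1 :: real^'n::finite)) ` {..<M}.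
           \<exists>q::int. \<bar>w * c$i - w * d$i - 2 * pi * of_int q\<bar> \<le> 2 * pi / real M"
proof -
  obtain j q where "j < M" "\<bar>w * c$i - 2 * pi * real j / real M - 2 * pi * of_int q\<bar> \<le> 2 * pi / real M"
    using angle_near_grid[OF \<open>M > 0\<close>] by blast
  moreover have "w * ((2 * pi * real j / (w * real M)) *\<^sub>R (axis i 1 :: real^'n)) $ i = 2 * pi * real j / real M"
    using assms by (simp add: axis_def)
  ultimately show ?thesis
    by auto
qed

lemma trig_ridge_Ckap: "trig_ridge i w a b \<theta> 0 \<theta>' \<in> Ckap k"
  unfolding Ckap_def
proof (intro CollectI conjI allI impI trig_ridge_Ckb)
  fix e :: real
  assume "e > 0"
  define W where "W = \<bar>b\<bar> * (max 1 \<bar>w\<bar>) ^ k"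
  have "W \<ge> 0"
    by (simp add: W_def)
  have dist_le: "cnorm k (\<lambda>x. trig_ridge i w a b \<theta> 0 \<theta>' (x + c) - trig_ridge i w a b \<theta> 0 \<theta>' (x + d))
      \<le> W * \<bar>w * c$i - w * d$i - 2 * pi * of_int q\<bar>" for c d q
    using cnorm_trig_ridge_diff_le[of k i w b "\<theta> + w * c$i" "\<theta> + w * d$i" q]
    unfolding trig_ridge_translate W_def by simp
  show "\<exists>C. finite C \<and> (\<forall>c. \<exists>d\<in>C. cnorm k (\<lambda>x. trig_ridge i w a b \<theta> 0 \<theta>' (x + c) - trig_ridge i w a b \<theta> 0 \<theta>' (x + d)) < e)"
  proof (cases "w = 0")
    case True
    have "cnorm k (\<lambda>x. trig_ridge i w a b \<theta> 0 \<theta>' (x + c) - trig_ridge i w a b \<theta> 0 \<theta>' (x + 0)) < e" for c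
      using le_less_trans[OF dist_le[of c 0 0]] True \<open>e > 0\<close> by simp
    then show ?thesis
      by (intro exI[of _ "{0}"]) auto
  next
    case False
    obtain n :: nat where "W * 2 * pi / e < real n"
      using reals_Archimedean2 by blast
    then have "W * (2 * pi / real (Suc n)) < e"
      using \<open>e > 0\<close> \<open>W \<ge> 0\<close> by (simp add: field_simps)
    then obtain M :: nat where "M > 0" "W * (2 * pi / real M) < e"
      by blast
    have "\<exists>d\<in>C. cnorm k (\<lambda>x. trig_ridge i w a b \<theta> 0 \<theta>' (x + c) - trig_ridge i w a b \<theta> 0 \<theta>' (x + d)) < e"
      if C: "C = (\<lambda>j. (2 * pi * real j / (w * real M)) *\<^sub>R (axis i 1 :: real^'a)) ` {..<M}" for C c
    proof -
      obtain d q where "d \<in> C" and q: "\<bar>w * c$i - w * d$i - 2 * pi * of_int q\<bar> \<le> 2 * pi / real M"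
        using axis_grid_approx[OF False \<open>M > 0\<close>, of i c] unfolding C by blast
      have "cnorm k (\<lambda>x. trig_ridge i w a b \<theta> 0 \<theta>' (x + c) - trig_ridge i w a b \<theta> 0 \<theta>' (x + d))
          \<le> W * (2 * pi / real M)"
        using order_trans[OF dist_le mult_left_mono[OF q \<open>W \<ge> 0\<close>]] .
      then show ?thesis
        using \<open>d \<in> C\<close> \<open>W * (2 * pi / real M) < e\<close> by force
    qed
    then show ?thesis
      by blast
  qed
qed

lemma trig_ridge_Cinfap: "trig_ridge i w a b \<theta> 0 \<theta>' \<in> Cinfap"
  unfolding Cinfap_def using trig_ridge_Ckap by blast

lemma CinfAp_component_bounded:
  assumes "f \<in> CinfAp"
  shows "\<exists>B. \<forall>x. \<bar>f x $ j\<bar> \<le> B"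
proof -
  have "(\<lambda>x. f x $ j) \<in> Ckb 1"
    using assms unfolding CinfAp_def Cinfap_def Ckap_def by auto
  then have "bounded (range (\<lambda>x. f x $ j))"
    unfolding Ckb_def by (metis (no_types, lifting) list.size(3) mem_Collect_eq pd.simps(1) zero_le)
  then show ?thesis
    unfolding bounded_iff by auto
qed

lemma abs_component_le_vnorm0:
  assumes "\<And>j. \<exists>B. \<forall>x. \<bar>f x $ j\<bar> \<le> B"
  shows "\<bar>f x $ j\<bar> \<le> vnorm 0 f"
proof -
  obtain B where "\<forall>x. \<bar>f x $ j\<bar> \<le> B"
    using assms by blast
  then have "\<bar>f x $ j\<bar> \<le> cnorm 0 (\<lambda>x. f x $ j)"
    unfolding cnorm_def by (intro cSUP_upper2[of _ _ "([], x)"] bdd_aboveI[of _ B]) auto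
  also have "\<dots> \<le> vnorm 0 f"
    unfolding vnorm_def by (rule Max_ge) auto
  finally show ?thesis .
qed

lemma curve_hasderiv_component:
  assumes deriv: "curve_hasderiv F D t" and F: "\<And>s. F s \<in> CinfAp"
    and D: "\<And>j. \<exists>B. \<forall>x. \<bar>D x $ j\<bar> \<le> B"
  shows "((\<lambda>s. F s x $ j) has_real_derivative D x $ j) (at t)"
proof -
  define R where "R h = (\<lambda>y. (1 / h) *\<^sub>R (F (t + h) y - F t y) - D y)" for h
  have R_bounded: "\<exists>B. \<forall>y. \<bar>R h y $ i\<bar> \<le> B" for h i
  proof -
    obtain B1 B2 B3 where "\<forall>y. \<bar>F (t + h) y $ i\<bar> \<le> B1" "\<forall>y. \<bar>F t y $ i\<bar> \<le> B2" "\<forall>y. \<bar>D y $ i\<bar> \<le> B3"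
      using CinfAp_component_bounded[OF F] D by metis
    then have bounds: "\<bar>F (t + h) y $ i - F t y $ i\<bar> \<le> B1 + B2" "\<bar>D y $ i\<bar> \<le> B3" for y
      by (auto intro: order_trans[OF abs_triangle_ineq4] add_mono)
    have "\<bar>R h y $ i\<bar> \<le> \<bar>1 / h\<bar> * (B1 + B2) + B3" for y
    proof -
      have "R h y $ i = (1 / h) * (F (t + h) y $ i - F t y $ i) - D y $ i"
        by (simp add: R_def)
      then have "\<bar>R h y $ i\<bar> \<le> \<bar>1 / h\<bar> * \<bar>F (t + h) y $ i - F t y $ i\<bar> + \<bar>D y $ i\<bar>"
        by (metis abs_mult abs_triangle_ineq4)
      also have "\<dots> \<le> \<bar>1 / h\<bar> * (B1 + B2) + B3"
        by (intro add_mono mult_left_mono bounds) simp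
      finally show ?thesis .
    qed
    then show ?thesis by blast
  qed
  have "((\<lambda>h. vnorm 0 (R h)) \<longlongrightarrow> 0) (at 0)"
    using deriv unfolding curve_hasderiv_def R_def by blast
  then have "((\<lambda>h. R h x $ j) \<longlongrightarrow> 0) (at 0)"
    by (rule Lim_null_comparison[rotated]) (simp add: abs_component_le_vnorm0[OF R_bounded])
  then have "((\<lambda>h. R h x $ j + D x $ j) \<longlongrightarrow> 0 + D x $ j) (at 0)"
    by (intro tendsto_intros)
  moreover have "R h x $ j + D x $ j = (F (t + h) x $ j - F t x $ j) / h" for h
    by (simp add: R_def divide_inverse mult.commute)
  ultimately show ?thesis
    unfolding DERIV_def by simp
qed

lemma LGflow_component_deriv:
  assumes flow: "LGflow u F" and u: "u \<in> CinfAp"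
  shows "((\<lambda>s. F s x $ j) has_real_derivative u (x + F t x) $ j) (at t)"
proof -
  have "curve_hasderiv F (\<lambda>x. u (x + F t x)) t" "\<And>s. F s \<in> CinfAp"
    using flow unfolding LGflow_def DiffAp_def by blast+
  moreover have "\<exists>B. \<forall>x. \<bar>u (x + F t x) $ j\<bar> \<le> B" for j
    using CinfAp_component_bounded[OF u] by blast
  ultimately show ?thesis
    by (rule curve_hasderiv_component)
qed

definition coord_field :: "'n::finite \<Rightarrow> (real \<Rightarrow> real) \<Rightarrow> 'n vf"
  where "coord_field i g = (\<lambda>x. g (x$i) *\<^sub>R axis i 1)"

lemma strict_mono_if_pos_deriv:
  assumes "\<And>r. (H has_real_derivative h r) (at r)" "\<And>r. h r > 0"
  shows "strict_mono H"
proof (rule strict_monoI)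
  fix a b :: real
  assume "a < b"
  then show "H a < H b"
    by (rule DERIV_pos_imp_increasing) (use assms in blast)
qed

lemma LGflow_coord_field:
  assumes flow: "LGflow (coord_field i g) F" and ap: "coord_field i g \<in> CinfAp"
    and H: "\<And>r. (H has_real_derivative 1 / g r) (at r)" and g: "\<And>r. g r > 0"
  shows "H (x$i + F t x $ i) = H (x$i) + t" and "j \<noteq> i \<Longrightarrow> F t x $ j = 0"
proof -
  have F0: "F 0 = (\<lambda>x. 0)"
    using flow unfolding LGflow_def by blast
  have D: "((\<lambda>s. F s x $ j) has_real_derivative coord_field i g (x + F t x) $ j) (at t)" for j t
    by (rule LGflow_component_deriv[OF flow ap])
  define z where "z t = x$i + F t x $ i" for t
  have "(z has_real_derivative g (z t)) (at t)" for t
    unfolding z_def using DERIV_add[OF DERIV_const[of "x$i"] D[of i t]] by (simp add: coord_field_def)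
  then have "((\<lambda>t. H (z t) - t) has_real_derivative 1 / g (z t) * g (z t) - 1) (at t)" for t
    by (intro DERIV_diff DERIV_chain2[OF H] DERIV_ident)
  moreover have "1 / g (z t) * g (z t) - 1 = 0" for t
    using g[of "z t"] by simp
  ultimately have "((\<lambda>t. H (z t) - t) has_real_derivative 0) (at t)" for t
    by metis
  then have "H (z t) - t = H (z 0) - 0"
    by (intro DERIV_isconst_all) blast
  then show "H (x$i + F t x $ i) = H (x$i) + t"
    by (simp add: z_def F0)
  assume "j \<noteq> i"
  then have "((\<lambda>s. F s x $ j) has_real_derivative 0) (at t)" for t
    using D[of j t] by (simp add: coord_field_def axis_def)
  then have "F t x $ j = F 0 x $ j"
    by (intro DERIV_isconst_all) blast
  then show "F t x $ j = 0"
    by (simp add: F0)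
qed

lemma LGflow_coord_field_eqI:
  assumes flow: "LGflow (coord_field i g) F" and ap: "coord_field i g \<in> CinfAp"
    and H: "\<And>r. (H has_real_derivative 1 / g r) (at r)" and g: "\<And>r. g r > 0"
    and r: "H (x$i + r) = H (x$i) + t"
  shows "F t x = r *\<^sub>R axis i 1"
proof -
  have "inj H"
    using strict_mono_if_pos_deriv[OF H] g by (simp add: strict_mono_imp_inj_on)
  moreover have "H (x$i + F t x $ i) = H (x$i + r)"
    using LGflow_coord_field(1)[OF flow ap H g] r by simp
  ultimately have "F t x $ i = r"
    by (simp add: inj_eq)
  then show ?thesis
    using LGflow_coord_field(2)[OF flow ap H g] by (simp add: vec_eq_iff axis_def)
qed

lemma ExpLG_coord_field:
  assumes ex: "\<exists>F. LGflow (coord_field i g) F" and ap: "coord_field i g \<in> CinfAp"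
    and H: "\<And>r. (H has_real_derivative 1 / g r) (at r)" and g: "\<And>r. g r > 0"
    and per: "\<And>r. H (r + p) = H r + 1"
  shows "ExpLG (coord_field i g) = (\<lambda>x. x + p *\<^sub>R axis i 1)"
proof -
  obtain F where flow: "LGflow (coord_field i g) F"
    using ex by blast
  have F: "F t x = (F t x $ i) *\<^sub>R axis i 1" for t x
    by (rule LGflow_coord_field_eqI[OF flow ap H g LGflow_coord_field(1)[OF flow ap H g]])
  have unique: "F' = F" if "LGflow (coord_field i g) F'" for F'
    using LGflow_coord_field_eqI[OF that ap H g LGflow_coord_field(1)[OF flow ap H g]] F by (auto intro!: ext)
  have "(THE F. LGflow (coord_field i g) F) = F"
    by (intro the_equality flow unique)
  moreover have "F 1 x = p *\<^sub>R axis i 1" for x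
    using per by (intro LGflow_coord_field_eqI[OF flow ap H g]) simp
  ultimately show ?thesis
    by (simp add: ExpLG_def)
qed

lemma coord_field_cos_component:
  "(\<lambda>x. coord_field i (\<lambda>r. K * (1 + s * cos (w * r))) x $ j) =
     (if j = i then trig_ridge i w K (K * s) 0 0 0 else trig_ridge i w 0 0 0 0 0)"
  by (rule ext) (simp add: coord_field_def trig_ridge_def axis_def algebra_simps)

lemma coord_field_cos_CinfAp: "coord_field i (\<lambda>r. K * (1 + s * cos (w * r))) \<in> CinfAp"
  by (simp add: CinfAp_def coord_field_cos_component trig_ridge_Cinfap)

lemma vnorm_coord_field_cos_le:
  "vnorm k (coord_field i (\<lambda>r. K * (1 + s * cos (w * r)))) \<le> \<bar>K\<bar> + \<bar>K * s\<bar> * (max 1 \<bar>w\<bar>) ^ k"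
proof -
  have "cnorm k (trig_ridge i w 0 0 0 0 0) \<le> \<bar>K\<bar> + \<bar>K * s\<bar> * (max 1 \<bar>w\<bar>) ^ k"
    by (rule order_trans[OF cnorm_trig_ridge_le]) simp
  moreover have "cnorm k (trig_ridge i w K (K * s) 0 0 0) \<le> \<bar>K\<bar> + \<bar>K * s\<bar> * (max 1 \<bar>w\<bar>) ^ k"
    using cnorm_trig_ridge_le[of k i w K "K * s" 0 0 0] by simp
  ultimately show ?thesis
    unfolding vnorm_def coord_field_cos_component by (intro Max.boundedI) auto
qed

lemma vnorm_coord_field_cos_less:
  assumes "0 < K" "K \<le> e / 2" "0 \<le> s" "s * (max 1 \<bar>w\<bar>) ^ k \<le> 1/2"
  shows "vnorm k (coord_field i (\<lambda>r. K * (1 + s * cos (w * r)))) < e"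
proof -
  have "0 \<le> s * (max 1 \<bar>w\<bar>) ^ k"
    using assms(3) by simp
  have "vnorm k (coord_field i (\<lambda>r. K * (1 + s * cos (w * r)))) \<le> \<bar>K\<bar> + \<bar>K * s\<bar> * (max 1 \<bar>w\<bar>) ^ k"
    by (rule vnorm_coord_field_cos_le)
  also have "\<dots> = K * (1 + s * (max 1 \<bar>w\<bar>) ^ k)"
    using assms by (simp add: abs_mult algebra_simps)
  also have "\<dots> \<le> e / 2 * (3 / 2)"
    using assms \<open>0 \<le> s * (max 1 \<bar>w\<bar>) ^ k\<close> by (intro mult_mono) simp_all
  also have "\<dots> < e"
    using assms by simp
  finally show ?thesis .
qed

lemma coord_field_cos_eqD:
  assumes eq: "coord_field i (\<lambda>r. K * (1 + s * cos (w * r))) = coord_field i (\<lambda>r. K' * (1 + s' * cos (w * r)))"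
    and "K \<noteq> 0" "w \<noteq> 0"
  shows "s = s'"
proof -
  have profile: "K * (1 + s * cos (w * r)) = K' * (1 + s' * cos (w * r))" for r
    using arg_cong[where f="\<lambda>v. v $ i", OF fun_cong[OF eq, of "r *\<^sub>R axis i 1"]]
    by (simp add: coord_field_def axis_def)
  have "K = K'"
    using profile[of "pi / (2 * w)"] \<open>w \<noteq> 0\<close> by simp
  moreover have "K * (1 + s) = K' * (1 + s')"
    using profile[of 0] by simp
  ultimately show ?thesis
    using \<open>K \<noteq> 0\<close> by simp
qed

lemma periodic_antiderivative:
  fixes f :: "real \<Rightarrow> real"
  assumes cont: "\<And>r. isCont f r" and "p > 0" and per: "\<And>r. f (r + p) = f r"
    and pos: "\<And>r. 0 < f r" and le: "\<And>r. f r \<le> B"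
  obtains G K where "\<And>r. (G has_real_derivative f r) (at r)" "\<And>r. G (r + p) = G r + K" "0 < K" "K \<le> p * B"
proof -
  obtain G where G: "(G has_real_derivative f r) (at r)" for r
    using einterval_antiderivative[of "-\<infinity>" "\<infinity>" f] cont
    by (auto simp: has_real_derivative_iff_has_vector_derivative)
  define K where "K = G p - G 0"
  have "G (r + p) - G r = K" for r
  proof -
    have "((\<lambda>r. G (r + p) - G r) has_real_derivative f (r + p) * (1 + 0) - f r) (at r)" for r
      by (intro DERIV_diff DERIV_chain2[OF G] DERIV_add DERIV_ident DERIV_const G)
    then have "((\<lambda>r. G (r + p) - G r) has_real_derivative 0) (at r)" for r
      by (simp add: per)
    then have "G (r + p) - G r = G (0 + p) - G 0"
      by (intro DERIV_isconst_all) blast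
    then show ?thesis
      by (simp add: K_def)
  qed
  moreover have "0 < K"
  proof -
    have "G 0 < G p"
      by (rule DERIV_pos_imp_increasing[OF \<open>p > 0\<close>]) (use G pos in blast)
    then show ?thesis
      by (simp add: K_def)
  qed
  moreover have "K \<le> p * B"
  proof -
    obtain z where "G p - G 0 = (p - 0) * f z"
      using MVT2[OF \<open>p > 0\<close>, of G f] G by blast
    then have "K = p * f z"
      by (simp add: K_def)
    then show ?thesis
      using le[of z] \<open>p > 0\<close> by (simp add: mult_left_mono)
  qed
  ultimately show ?thesis
    using G by (intro that[of G K]) (auto simp: algebra_simps)
qed

lemma ExpLG_coord_field_cos:
  assumes "0 < s" "s \<le> 1/2" "w > 0"
  obtains K where "0 < K" "K \<le> 4 * pi / w"
    and "\<exists>F. LGflow (coord_field i (\<lambda>r. K * (1 + s * cos (w * r)))) F \<Longrightarrow>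
           ExpLG (coord_field i (\<lambda>r. K * (1 + s * cos (w * r)))) = (\<lambda>x. x + (2 * pi / w) *\<^sub>R axis i 1)"
proof -
  define f where "f r = 1 / (1 + s * cos (w * r))" for r
  have denom: "1/2 \<le> 1 + s * cos (w * r)" for r
    using mult_left_mono[OF cos_ge_minus_one[of "w * r"], of s] assms by linarith
  have "isCont f r" for r
    unfolding f_def using denom[of r] by (intro continuous_intros) auto
  moreover have "0 < 2 * pi / w"
    using \<open>w > 0\<close> by simp
  moreover have "f (r + 2 * pi / w) = f r" for r
    using \<open>w > 0\<close> cos_periodic[of "w * r"] by (simp add: f_def distrib_left)
  moreover have "0 < f r" "f r \<le> 2" for r
    using denom[of r] by (auto simp: f_def divide_le_eq)
  ultimately obtain G K where G: "\<And>r. (G has_real_derivative f r) (at r)"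
    and per: "\<And>r. G (r + 2 * pi / w) = G r + K" and "0 < K" "K \<le> 2 * pi / w * 2"
    using periodic_antiderivative by blast
  define H where "H r = G r / K" for r
  show ?thesis
  proof (rule that[of K])
    show "0 < K" "K \<le> 4 * pi / w"
      using \<open>0 < K\<close> \<open>K \<le> 2 * pi / w * 2\<close> by simp_all
    have "(H has_real_derivative 1 / (K * (1 + s * cos (w * r)))) (at r)" for r
      unfolding H_def using DERIV_cdivide[OF G, of K] by (simp add: f_def mult.commute)
    moreover have "0 < K * (1 + s * cos (w * r))" for r
      using \<open>0 < K\<close> denom[of r] by simp
    moreover have "H (r + 2 * pi / w) = H r + 1" for r
      using per[of r] \<open>0 < K\<close> by (simp add: H_def add_divide_distrib)
    ultimately show "ExpLG (coord_field i (\<lambda>r. K * (1 + s * cos (w * r)))) = (\<lambda>x. x + (2 * pi / w) *\<^sub>R axis i 1)"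
      if "\<exists>F. LGflow (coord_field i (\<lambda>r. K * (1 + s * cos (w * r)))) F"
      by (rule ExpLG_coord_field[OF that coord_field_cos_CinfAp])
  qed
qed

lemma ExpLG_coord_field_cos_family:
  assumes "w > 0"
  obtains K where "\<And>s. s \<in> {0<..1/2} \<Longrightarrow> 0 < K s" "\<And>s. s \<in> {0<..1/2} \<Longrightarrow> K s \<le> 4 * pi / w"
    and "\<And>s. s \<in> {0<..1/2} \<Longrightarrow> \<exists>F. LGflow (coord_field i (\<lambda>r. K s * (1 + s * cos (w * r)))) F \<Longrightarrow>
           ExpLG (coord_field i (\<lambda>r. K s * (1 + s * cos (w * r)))) = (\<lambda>x. x + (2 * pi / w) *\<^sub>R axis i 1)"
proof -
  have "\<exists>K. 0 < K \<and> K \<le> 4 * pi / w \<and>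
      ((\<exists>F. LGflow (coord_field i (\<lambda>r. K * (1 + s * cos (w * r)))) F) \<longrightarrow>
        ExpLG (coord_field i (\<lambda>r. K * (1 + s * cos (w * r)))) = (\<lambda>x. x + (2 * pi / w) *\<^sub>R axis i 1))"
    if "s \<in> {0<..1/2}" for s
  proof -
    have "0 < s" "s \<le> 1/2"
      using that by auto
    then obtain K where "0 < K" "K \<le> 4 * pi / w"
      "\<exists>F. LGflow (coord_field i (\<lambda>r. K * (1 + s * cos (w * r)))) F \<Longrightarrow>
        ExpLG (coord_field i (\<lambda>r. K * (1 + s * cos (w * r)))) = (\<lambda>x. x + (2 * pi / w) *\<^sub>R axis i 1)"
      using ExpLG_coord_field_cos[where i=i] assms by blast
    then show ?thesis
      by blast
  qed
  then show ?thesis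
    using that by metis
qed

lemma ExpLG_eq_if_no_flow:
  assumes "\<not> (\<exists>F. LGflow u F)" "\<not> (\<exists>F. LGflow v F)"
  shows "ExpLG u = ExpLG v"
proof -
  have "LGflow u = LGflow v"
    using assms by (intro ext) blast
  then show ?thesis
    by (simp add: ExpLG_def)
qed

lemma infinite_not_inj_on_bool:
  fixes P :: "'a \<Rightarrow> bool"
  assumes "infinite A"
  shows "\<not> inj_on P A"
proof
  assume "inj_on P A"
  moreover have "finite (P ` A)"
    by (rule finite_subset[OF subset_UNIV]) simp
  ultimately show False
    using assms finite_imageD by blast
qed

lemma small_fields_sharing_time_one_map:
  assumes "e > 0"
  obtains \<sigma> and u :: "real \<Rightarrow> 'n::finite vf" and T
  where "0 < \<sigma>" "inj_on u {0<..\<sigma>}" "\<And>s. s \<in> {0<..\<sigma>} \<Longrightarrow> u s \<in> {v \<in> CinfAp. vnorm k v < e}"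
    and "\<And>s. s \<in> {0<..\<sigma>} \<Longrightarrow> \<exists>F. LGflow (u s) F \<Longrightarrow> ExpLG (u s) = T"
proof -
  fix i :: 'n
  define w where "w = 8 * pi / e"
  define W where "W = (max 1 \<bar>w\<bar>) ^ k"
  define \<sigma> where "\<sigma> = 1 / (2 * W)"
  have "w > 0" "W \<ge> 1"
    using \<open>e > 0\<close> by (simp_all add: w_def W_def)
  then have "0 < \<sigma>" "\<sigma> \<le> 1/2" "\<sigma> * W = 1/2"
    by (simp_all add: \<sigma>_def)
  obtain K where K_pos: "\<And>s. s \<in> {0<..1/2} \<Longrightarrow> 0 < K s"
    and K_le: "\<And>s. s \<in> {0<..1/2} \<Longrightarrow> K s \<le> 4 * pi / w"
    and K_exp: "\<And>s. s \<in> {0<..1/2} \<Longrightarrow> \<exists>F. LGflow (coord_field i (\<lambda>r. K s * (1 + s * cos (w * r)))) F \<Longrightarrow>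
           ExpLG (coord_field i (\<lambda>r. K s * (1 + s * cos (w * r)))) = (\<lambda>x. x + (2 * pi / w) *\<^sub>R axis i 1)"
    using ExpLG_coord_field_cos_family[OF \<open>w > 0\<close>] by metis
  define u where "u s = coord_field i (\<lambda>r. K s * (1 + s * cos (w * r)))" for s
  have half: "s \<in> {0<..1/2}" if "s \<in> {0<..\<sigma>}" for s
    using that \<open>\<sigma> \<le> 1/2\<close> by auto
  have small: "u s \<in> {v \<in> CinfAp. vnorm k v < e}" if "s \<in> {0<..\<sigma>}" for s
  proof -
    have "s * W \<le> \<sigma> * W"
      using that \<open>W \<ge> 1\<close> by (intro mult_right_mono) auto
    then have "s * W \<le> 1/2"
      using \<open>\<sigma> * W = 1/2\<close> by simp
    moreover have "K s \<le> e / 2"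
      using K_le[OF half[OF that]] \<open>e > 0\<close> by (simp add: w_def)
    ultimately show ?thesis
      using K_pos[OF half[OF that]] that unfolding u_def W_def
      by (simp add: coord_field_cos_CinfAp vnorm_coord_field_cos_less)
  qed
  have u_inj: "inj_on u {0<..\<sigma>}"
  proof (rule inj_onI)
    fix s s'
    assume s: "s \<in> {0<..\<sigma>}" and eq: "u s = u s'"
    have "K s \<noteq> 0"
      using K_pos[OF half[OF s]] by simp
    then show "s = s'"
      by (rule coord_field_cos_eqD[OF eq[unfolded u_def]]) (use \<open>w > 0\<close> in simp)
  qed
  have u_exp: "\<exists>F. LGflow (u s) F \<Longrightarrow> ExpLG (u s) = (\<lambda>x. x + (2 * pi / w) *\<^sub>R axis i 1)"
    if "s \<in> {0<..\<sigma>}" for s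
    unfolding u_def by (rule K_exp[OF half[OF that]])
  show ?thesis
    by (rule that[OF \<open>0 < \<sigma>\<close> u_inj small u_exp])
qed

lemma ExpLG_not_inj_on_ball:
  assumes "e > 0"
  shows "\<not> inj_on (ExpLG :: 'n::finite vf \<Rightarrow> 'n vf) {u \<in> CinfAp. vnorm k u < e}"
proof
  assume inj: "inj_on (ExpLG :: 'n vf \<Rightarrow> 'n vf) {u \<in> CinfAp. vnorm k u < e}"
  obtain \<sigma> and u :: "real \<Rightarrow> 'n vf" and T where "0 < \<sigma>" and u_inj: "inj_on u {0<..\<sigma>}"
    and small: "\<And>s. s \<in> {0<..\<sigma>} \<Longrightarrow> u s \<in> {v \<in> CinfAp. vnorm k v < e}"
    and u_exp: "\<And>s. s \<in> {0<..\<sigma>} \<Longrightarrow> \<exists>F. LGflow (u s) F \<Longrightarrow> ExpLG (u s) = T"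
    using small_fields_sharing_time_one_map[OF \<open>e > 0\<close>, where k=k] by blast
  have "\<not> inj_on (\<lambda>s. \<exists>F. LGflow (u s) F) {0<..\<sigma>}"
    by (rule infinite_not_inj_on_bool) (simp add: \<open>0 < \<sigma>\<close>)
  then obtain s s' where s: "s \<in> {0<..\<sigma>}" "s' \<in> {0<..\<sigma>}" "s \<noteq> s'"
    and same_flow: "(\<exists>F. LGflow (u s) F) \<longleftrightarrow> (\<exists>F. LGflow (u s') F)"
    unfolding inj_on_def by blast
  (* Without a flow, ExpLG is THE of an empty predicate: the same junk value for every field. *)
  have "ExpLG (u s) = ExpLG (u s')"
  proof (cases "\<exists>F. LGflow (u s) F")
    case True
    then show ?thesis
      using same_flow u_exp[OF s(1)] u_exp[OF s(2)] by simp
  next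
    case False
    then show ?thesis
      using same_flow by (intro ExpLG_eq_if_no_flow) simp_all
  qed
  then have "u s = u s'"
    using small[OF s(1)] small[OF s(2)] by (rule inj_onD[OF inj])
  then show False
    using inj_onD[OF u_inj _ s(1) s(2)] s(3) by blast
qed

theorem corollary3p5:
  shows "\<not> (\<exists>V :: ('n::finite) vf set. apopen V \<and> (\<lambda>x. 0) \<in> V \<and>
            C1F_diffeo_onto_image V (\<lambda>u. disp (ExpLG u)))"
proof
  assume "\<exists>V :: 'n vf set. apopen V \<and> (\<lambda>x. 0) \<in> V \<and> C1F_diffeo_onto_image V (\<lambda>u. disp (ExpLG u))"
  then obtain V :: "'n vf set" where "apopen V" "(\<lambda>x. 0) \<in> V"
    and inj: "inj_on (disp \<circ> ExpLG) V"
    unfolding C1F_diffeo_onto_image_def comp_def by blast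
  then obtain k e where "e > 0" and ball: "{g \<in> CinfAp. vnorm k (g - (\<lambda>x. 0)) < e} \<subseteq> V"
    unfolding apopen_def by blast
  have "inj_on ExpLG {u :: 'n vf. u \<in> CinfAp \<and> vnorm k u < e}"
    using inj_on_imageI2[OF inj_on_subset[OF inj ball]] by (simp add: fun_diff_def)
  then show False
    using ExpLG_not_inj_on_ball[OF \<open>e > 0\<close>] by blast
qed

end
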